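(* Let $\alpha\colon\Gamma\curvearrowright(X,\mu)$ and $\beta\colon\Gamma\curvearrowright(Y,\nu)$ be p.m.p. actions. For every finite $S\subseteq\Gamma$, $k\in\mathbb{N}^+$ and $\epsilon>0$ there exists $N\in\mathbb{N}^+$ such that $\{M^{\alpha\times\beta}_{S,k}(f): f\in\mathrm{Step}_{k,N}(X,\mu;Y,\nu)\}$ is an $\epsilon$-net in $C^{\alpha\times\beta}_{S,k}$ with respect to $\mathrm{dist}_\infty$; let $N_{S,k}(\alpha,\beta,\epsilon)$ denote the least such $N$. Moreover, if $\tilde\alpha,\tilde\beta$ are p.m.p. actions with $\alpha\simeq\tilde\alpha$ and $\beta\simeq\tilde\beta$, then $N_{S,k}(\alpha,\beta,\epsilon)=N_{S,k}(\tilde\alpha,\tilde\beta,\epsilon)$; i.e., $N_{S,k}$ depends only on the weak equivalence classes of $\alpha$ and $\beta$.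
   Context: $\Gamma$ is a countably infinite group; p.m.p. actions are measure-preserving actions on standard probability spaces; $\alpha\times\beta$ is the diagonal product action on $(X\times Y,\mu\times\nu)$. Each $k\in\mathbb{N}^+$ is identified with $\{0,\dots,k-1\}$; $\mathrm{Meas}_k(X,\mu)$ is the set of measurable maps $X\to k$. For finite $S\subseteq\Gamma$, $M^\alpha_{S,k}(f)(\gamma,i,j)=\mu(\{x: f(x)=i, f(\gamma\cdot x)=j\})$, and $C^\alpha_{S,k}$ is the closure in $[0,1]^{S\times k\times k}$ of $\{M^\alpha_{S,k}(f): f\in\mathrm{Meas}_k(X,\mu)\}$; $\mathrm{dist}_\infty$ is the sup-metric. $\alpha\simeq\beta$ (weak equivalence) means $C^\alpha_{S,k}=C^\beta_{S,k}$ for all finite $S$ and all $k$. An $N$-step function is a map $f\in\mathrm{Meas}_k(X\times Y,\mu\times\nu)$ of the form $f(x,y)=\phi(g(x),h(y))$ with $g\in\mathrm{Meas}_N(X,\mu)$, $h\in\mathrm{Meas}_N(Y,\nu)$, $\phi\colon N\times N\to k$; $\mathrm{Step}_{k,N}(X,\mu;Y,\nu)$ is the set of these. A subset $A$ of a metric space $B$ is an $\epsilon$-net if every point of $B$ is at distance $<\epsilon$ from some point of $A$. *)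

theory Defs
  imports "HOL-Probability.Probability" "HOL-Library.Infinite_Typeclass" "HOL-Library.Countable"
begin

text \<open>A p.m.p. action of the group 'g on a standard probability space.  A standard
  Borel space is modelled as a Polish type with its Borel sigma-algebra.\<close>
definition pmp_action :: "'x::polish_space measure \<Rightarrow> ('g::group_add \<Rightarrow> 'x \<Rightarrow> 'x) \<Rightarrow> bool" where
  "pmp_action M a \<longleftrightarrow> prob_space M \<and> sets M = sets borel \<and>
     (\<forall>g. a g \<in> M \<rightarrow>\<^sub>M M \<and> distr M M (a g) = M) \<and>
     (\<forall>x. a 0 x = x) \<and> (\<forall>g h x. a (g + h) x = a g (a h x))"

definition prod_act :: "('g \<Rightarrow> 'x \<Rightarrow> 'x) \<Rightarrow> ('g \<Rightarrow> 'y \<Rightarrow> 'y) \<Rightarrow> 'g \<Rightarrow> 'x \<times> 'y \<Rightarrow> 'x \<times> 'y" where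
  "prod_act a b g p = (a g (fst p), b g (snd p))"

definition Meas :: "nat \<Rightarrow> 'x measure \<Rightarrow> ('x \<Rightarrow> nat) set" where
  "Meas k M = M \<rightarrow>\<^sub>M count_space {..<k}"

text \<open>M^a_{S,k}(f), a point of [0,1]^{S\<times>k\<times>k}; coordinates outside S\<times>k\<times>k are set to 0.\<close>
definition Mat :: "'x measure \<Rightarrow> ('g \<Rightarrow> 'x \<Rightarrow> 'x) \<Rightarrow> 'g set \<Rightarrow> nat \<Rightarrow> ('x \<Rightarrow> nat)
    \<Rightarrow> ('g \<times> nat \<times> nat \<Rightarrow> real)" where
  "Mat M a S k f = (\<lambda>(g, i, j). if g \<in> S \<and> i < k \<and> j < k
      then measure M {x \<in> space M. f x = i \<and> f (a g x) = j} else 0)"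

definition Cset :: "'x measure \<Rightarrow> ('g \<Rightarrow> 'x \<Rightarrow> 'x) \<Rightarrow> 'g set \<Rightarrow> nat \<Rightarrow> ('g \<times> nat \<times> nat \<Rightarrow> real) set" where
  "Cset M a S k = closure (Mat M a S k ` Meas k M)"

definition dist_inf :: "'g set \<Rightarrow> nat \<Rightarrow> ('g \<times> nat \<times> nat \<Rightarrow> real) \<Rightarrow> ('g \<times> nat \<times> nat \<Rightarrow> real) \<Rightarrow> real" where
  "dist_inf S k u v = Max (insert 0 ((\<lambda>p. \<bar>u p - v p\<bar>) ` (S \<times> {..<k} \<times> {..<k})))"

definition is_net :: "'g set \<Rightarrow> nat \<Rightarrow> real \<Rightarrow> ('g \<times> nat \<times> nat \<Rightarrow> real) set \<Rightarrow> ('g \<times> nat \<times> nat \<Rightarrow> real) set \<Rightarrow> bool" where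
  "is_net S k eps A B \<longleftrightarrow> (\<forall>b\<in>B. \<exists>a\<in>A. dist_inf S k b a < eps)"

definition weak_equiv :: "'x measure \<Rightarrow> ('g \<Rightarrow> 'x \<Rightarrow> 'x) \<Rightarrow> 'y measure \<Rightarrow> ('g \<Rightarrow> 'y \<Rightarrow> 'y) \<Rightarrow> bool" where
  "weak_equiv M a N b \<longleftrightarrow> (\<forall>S k. finite S \<and> k > 0 \<longrightarrow> Cset M a S k = Cset N b S k)"

definition Step :: "nat \<Rightarrow> nat \<Rightarrow> 'x measure \<Rightarrow> 'y measure \<Rightarrow> ('x \<times> 'y \<Rightarrow> nat) set" where
  "Step k n M N = {f. \<exists>g h phi. g \<in> Meas n M \<and> h \<in> Meas n N \<and>
      (\<forall>i<n. \<forall>j<n. phi i j < k) \<and> (\<forall>x y. f (x, y) = phi (g x) (h y))}"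

definition step_net :: "'x measure \<Rightarrow> ('g \<Rightarrow> 'x \<Rightarrow> 'x) \<Rightarrow> 'y measure \<Rightarrow> ('g \<Rightarrow> 'y \<Rightarrow> 'y)
    \<Rightarrow> 'g set \<Rightarrow> nat \<Rightarrow> real \<Rightarrow> nat \<Rightarrow> bool" where
  "step_net M a N b S k eps n \<longleftrightarrow>
     is_net S k eps (Mat (M \<Otimes>\<^sub>M N) (prod_act a b) S k ` Step k n M N)
                    (Cset (M \<Otimes>\<^sub>M N) (prod_act a b) S k)"

definition Nsk :: "'x measure \<Rightarrow> ('g \<Rightarrow> 'x \<Rightarrow> 'x) \<Rightarrow> 'y measure \<Rightarrow> ('g \<Rightarrow> 'y \<Rightarrow> 'y)
    \<Rightarrow> 'g set \<Rightarrow> nat \<Rightarrow> real \<Rightarrow> nat" where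
  "Nsk M a N b S k eps = (LEAST n. n > 0 \<and> step_net M a N b S k eps n)"

end

theory Submission
  imports Defs
begin

text \<open>
  Every measurable \<open>f : X \<times> Y \<rightarrow> k\<close> is close in measure to a step function: by regularity of the
  product measure on the Polish space \<open>X \<times> Y\<close>, each level set of \<open>f\<close> is approximated by a
  finite union of open rectangles, and finitely many such unions come from one pair of finite
  partitions of \<open>X\<close> and \<open>Y\<close>. As the matrix \<open>M(f)\<close> moves by at most twice the measure of the
  set where \<open>f\<close> changes, step matrices are dense in \<open>C\<close>; \<open>C\<close> lies in the cube
  \<open>[0,1]\<^bsup>S\<times>k\<times>k\<^esup>\<close>, so a finite \<open>\<epsilon>/3\<close>-net of it is approximated at one common level \<open>N\<close>.

  The matrix of \<open>\<phi>(g x, h y)\<close> is a polynomial in the matrices of \<open>g\<close> and \<open>h\<close>. Weak equivalence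
  of the factors therefore puts the step matrices of level \<open>n\<close> of each product action in the
  closure of those of the other, and makes the two sets \<open>C\<close> equal. Since an \<open>\<epsilon>\<close>-net is defined
  by a strict inequality, it survives passing to the closure, so both products have the same
  levels \<open>n\<close> giving \<open>\<epsilon>\<close>-nets and in particular the same least one.
\<close>

lemma tendsto_fun_iff:
  fixes f :: "'b \<Rightarrow> 'a \<Rightarrow> 'c::topological_space"
  shows "(f \<longlongrightarrow> l) F \<longleftrightarrow> (\<forall>i. ((\<lambda>x. f x i) \<longlongrightarrow> l i) F)"
proof -
  have "(f \<longlongrightarrow> l) F \<longleftrightarrow> limitin (product_topology (\<lambda>_. euclidean) UNIV) f l F"
    by (simp add: euclidean_product_topology)
  also have "\<dots> \<longleftrightarrow> (\<forall>i. ((\<lambda>x. f x i) \<longlongrightarrow> l i) F)"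
    by (subst limitin_componentwise) auto
  finally show ?thesis .
qed

lemma dist_inf_nonneg: "finite S \<Longrightarrow> 0 \<le> dist_inf S k u v"
  unfolding dist_inf_def by (rule Max_ge) auto

lemma dist_inf_ge: "finite S \<Longrightarrow> p \<in> S \<times> {..<k} \<times> {..<k} \<Longrightarrow> \<bar>u p - v p\<bar> \<le> dist_inf S k u v"
  unfolding dist_inf_def by (rule Max_ge) auto

lemma dist_inf_lessI:
  "finite S \<Longrightarrow> c > 0 \<Longrightarrow> (\<And>p. p \<in> S \<times> {..<k} \<times> {..<k} \<Longrightarrow> \<bar>u p - v p\<bar> < c)
    \<Longrightarrow> dist_inf S k u v < c"
  unfolding dist_inf_def by (subst Max_less_iff) auto

lemma dist_inf_leI:
  "finite S \<Longrightarrow> c \<ge> 0 \<Longrightarrow> (\<And>p. p \<in> S \<times> {..<k} \<times> {..<k} \<Longrightarrow> \<bar>u p - v p\<bar> \<le> c)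
    \<Longrightarrow> dist_inf S k u v \<le> c"
  unfolding dist_inf_def by (subst Max_le_iff) auto

lemma dist_inf_triangle:
  assumes "finite S"
  shows "dist_inf S k u w \<le> dist_inf S k u v + dist_inf S k v w"
proof (rule dist_inf_leI[OF assms])
  show "0 \<le> dist_inf S k u v + dist_inf S k v w"
    using dist_inf_nonneg[OF assms] by simp
next
  fix p assume p: "p \<in> S \<times> {..<k} \<times> {..<k}"
  have "\<bar>u p - w p\<bar> \<le> \<bar>u p - v p\<bar> + \<bar>v p - w p\<bar>" by linarith
  also have "\<dots> \<le> dist_inf S k u v + dist_inf S k v w"
    using dist_inf_ge[OF assms p] by (intro add_mono) auto
  finally show "\<bar>u p - w p\<bar> \<le> dist_inf S k u v + dist_inf S k v w" .
qed

lemma closure_imp_dist_inf_less: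
  assumes "finite S" "b \<in> closure A" "\<delta> > 0"
  shows "\<exists>a\<in>A. dist_inf S k b a < \<delta>"
proof -
  define V where "V = (\<Inter>p\<in>S \<times> {..<k} \<times> {..<k}. (\<lambda>u. u p) -` ball (b p) \<delta>)"
  have "open V"
    unfolding V_def using assms(1) by (intro open_INT ballI open_vimage) auto
  moreover have "b \<in> V" using assms(3) by (auto simp: V_def)
  ultimately obtain a where a: "a \<in> A" "a \<in> V"
    using assms(2) open_Int_closure_eq_empty by blast
  have "dist_inf S k b a < \<delta>"
    using a(2) by (intro dist_inf_lessI[OF assms(1,3)]) (auto simp: V_def dist_real_def)
  with a(1) show ?thesis by blast
qed

text \<open>The converse needs the points to vanish off the finitely many coordinates seen by
  \<open>dist_inf\<close>, and a countable index type so that closures are sequential.\<close>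

lemma dist_inf_less_imp_closure:
  fixes b :: "'g::countable \<times> nat \<times> nat \<Rightarrow> real"
  assumes S: "finite S"
    and approx: "\<And>\<delta>. \<delta> > 0 \<Longrightarrow> \<exists>c\<in>C. dist_inf S k b c < \<delta>"
    and b_zero: "\<And>p. p \<notin> S \<times> {..<k} \<times> {..<k} \<Longrightarrow> b p = 0"
    and C_zero: "\<And>c p. c \<in> C \<Longrightarrow> p \<notin> S \<times> {..<k} \<times> {..<k} \<Longrightarrow> c p = 0"
  shows "b \<in> closure C"
proof -
  have "\<forall>m. \<exists>c\<in>C. dist_inf S k b c < 1 / Suc m"
    using approx by simp
  then obtain c where c: "\<And>m. c m \<in> C" "\<And>m. dist_inf S k b (c m) < 1 / Suc m"
    by metis
  have "((\<lambda>m. c m p) \<longlongrightarrow> b p) sequentially" for p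
  proof (cases "p \<in> S \<times> {..<k} \<times> {..<k}")
    case False
    then show ?thesis using C_zero[OF c(1)] b_zero by simp
  next
    case True
    have "\<bar>c m p - b p\<bar> \<le> inverse (real (Suc m))" for m
      using dist_inf_ge[OF S True, of b "c m"] c(2)[of m] by (simp add: divide_inverse)
    then have "((\<lambda>m. c m p - b p) \<longlongrightarrow> 0) sequentially"
      by (intro Lim_null_comparison[OF always_eventually LIMSEQ_inverse_real_of_nat]) auto
    then show ?thesis by (simp add: LIM_zero_iff)
  qed
  then have "c \<longlonglongrightarrow> b"
    by (simp add: tendsto_fun_iff)
  with c(1) show ?thesis
    by (auto simp: closure_sequential)
qed

lemma dist_inf_less_if_floor_eq:
  fixes m :: real
  assumes S: "finite S" and m: "0 < m"
    and eq: "\<And>p. p \<in> S \<times> {..<k} \<times> {..<k} \<Longrightarrow> \<lfloor>u p * m\<rfloor> = \<lfloor>v p * m\<rfloor>"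
  shows "dist_inf S k u v < 1 / m"
proof (rule dist_inf_lessI[OF S])
  fix p assume "p \<in> S \<times> {..<k} \<times> {..<k}"
  then have "\<lfloor>u p * m\<rfloor> = \<lfloor>v p * m\<rfloor>"
    by (rule eq)
  then have "\<bar>u p * m - v p * m\<bar> < 1"
    by linarith
  then have "\<bar>u p - v p\<bar> * m < 1"
    using m by (simp add: abs_mult left_diff_distrib[symmetric])
  then show "\<bar>u p - v p\<bar> < 1 / m"
    using m by (simp add: field_simps)
qed (use m in simp)

text \<open>One representative per occupied cell of the grid of mesh \<open>1/m\<close> is enough.\<close>

lemma dist_inf_finite_subnet:
  fixes A :: "('g \<times> nat \<times> nat \<Rightarrow> real) set"
  assumes S: "finite S" and \<delta>: "\<delta> > 0"
    and bounded: "\<And>u p. u \<in> A \<Longrightarrow> 0 \<le> u p \<and> u p \<le> 1"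
  shows "\<exists>F\<subseteq>A. finite F \<and> (\<forall>u\<in>A. \<exists>v\<in>F. dist_inf S k u v < \<delta>)"
proof -
  obtain m :: nat where m: "1 / \<delta> < m"
    using reals_Archimedean2 by blast
  then have m0: "0 < real m"
    using \<delta> by (metis less_trans zero_less_divide_1_iff)
  have mesh: "1 / real m < \<delta>"
    using m \<delta> m0 by (simp add: field_simps)
  define D where "D = S \<times> {..<k} \<times> {..<k}"
  define r where "r u = restrict (\<lambda>p. \<lfloor>u p * real m\<rfloor>) D" for u :: "'g \<times> nat \<times> nat \<Rightarrow> real"
  have "r ` A \<subseteq> PiE D (\<lambda>_. {0..int m})"
  proof
    fix \<rho> assume "\<rho> \<in> r ` A"
    then obtain u where u: "u \<in> A" "\<rho> = r u" by blast
    have "0 \<le> \<lfloor>u p * real m\<rfloor> \<and> \<lfloor>u p * real m\<rfloor> \<le> int m" for p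
    proof -
      have "0 \<le> u p * real m" "u p * real m \<le> real m"
        using bounded[OF u(1), of p] mult_right_mono[of "u p" 1 "real m"] by simp_all
      then show ?thesis by (simp add: le_floor_iff floor_le_iff)
    qed
    then show "\<rho> \<in> PiE D (\<lambda>_. {0..int m})"
      by (simp add: u(2) r_def)
  qed
  moreover have "finite (PiE D (\<lambda>_. {0..int m}))"
    using S by (simp add: D_def finite_PiE)
  ultimately have fin: "finite (r ` A)"
    by (rule finite_subset)
  have close: "dist_inf S k u v < \<delta>" if ruv: "r u = r v" for u v
  proof -
    have "\<lfloor>u p * real m\<rfloor> = \<lfloor>v p * real m\<rfloor>" if "p \<in> S \<times> {..<k} \<times> {..<k}" for p
      using fun_cong[OF ruv, of p] that by (simp add: r_def D_def)
    then have "dist_inf S k u v < 1 / real m"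
      by (rule dist_inf_less_if_floor_eq[OF S m0])
    with mesh show ?thesis by simp
  qed
  define pick where "pick \<rho> = (SOME u. u \<in> A \<and> r u = \<rho>)" for \<rho>
  have pick: "pick (r u) \<in> A \<and> r (pick (r u)) = r u" if "u \<in> A" for u
    unfolding pick_def by (rule someI[of _ u]) (use that in simp)
  show ?thesis
  proof (intro exI[of _ "pick ` r ` A"] conjI ballI)
    show "pick ` r ` A \<subseteq> A" using pick by blast
    show "finite (pick ` r ` A)" using fin by simp
    fix u assume "u \<in> A"
    then show "\<exists>v\<in>pick ` r ` A. dist_inf S k u v < \<delta>"
      using pick close by (metis image_eqI)
  qed
qed

lemma pmp_actionD:
  assumes "pmp_action M a"
  shows "prob_space M" "sets M = sets borel" "space M = UNIV"
    "a g \<in> M \<rightarrow>\<^sub>M M" "distr M M (a g) = M"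
  using assms unfolding pmp_action_def by (auto dest: sets_eq_imp_space_eq)

lemma pmp_action_pair:
  assumes "pmp_action M a" "pmp_action N b"
  shows "prob_space (M \<Otimes>\<^sub>M N)" "space (M \<Otimes>\<^sub>M N) = UNIV"
  using pmp_actionD(1,3)[OF assms(1)] pmp_actionD(1,3)[OF assms(2)]
  by (simp_all add: prob_space_pair space_pair_measure)

lemma prod_act_measure_preserving:
  assumes "pmp_action M a" "pmp_action N b"
  shows "prod_act a b g \<in> M \<Otimes>\<^sub>M N \<rightarrow>\<^sub>M M \<Otimes>\<^sub>M N"
    and "distr (M \<Otimes>\<^sub>M N) (M \<Otimes>\<^sub>M N) (prod_act a b g) = M \<Otimes>\<^sub>M N"
proof -
  note A = pmp_actionD[OF assms(1)] and B = pmp_actionD[OF assms(2)]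
  have eq: "prod_act a b g = (\<lambda>(x, y). (a g x, b g y))"
    by (auto simp: prod_act_def fun_eq_iff)
  show "prod_act a b g \<in> M \<Otimes>\<^sub>M N \<rightarrow>\<^sub>M M \<Otimes>\<^sub>M N"
    unfolding eq using A(4)[of g] B(4)[of g] by measurable
  interpret N: prob_space N by (rule B(1))
  have "distr M M (a g) \<Otimes>\<^sub>M distr N N (b g) = distr (M \<Otimes>\<^sub>M N) (M \<Otimes>\<^sub>M N) (\<lambda>(x, y). (a g x, b g y))"
    by (rule pair_measure_distr) (use A B N.sigma_finite_measure_axioms in auto)
  then show "distr (M \<Otimes>\<^sub>M N) (M \<Otimes>\<^sub>M N) (prod_act a b g) = M \<Otimes>\<^sub>M N"
    using A(5) B(5) eq by simp
qed

lemma measurable_compose_countable2: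
  fixes g :: "'a \<Rightarrow> 'b::countable" and h :: "'a \<Rightarrow> 'c::countable"
  assumes "g \<in> M \<rightarrow>\<^sub>M count_space UNIV" "h \<in> M \<rightarrow>\<^sub>M count_space UNIV"
  shows "(\<lambda>x. F (g x) (h x)) \<in> M \<rightarrow>\<^sub>M (count_space UNIV :: 'd measure)"
proof -
  have "(\<lambda>x. F i (h x)) \<in> M \<rightarrow>\<^sub>M (count_space UNIV :: 'd measure)" for i
    by (rule measurable_compose_countable'[OF _ assms(2)]) auto
  then show ?thesis
    by (rule measurable_compose_countable'[OF _ assms(1)]) auto
qed

lemma measurable_count_space_UNIV:
  "f \<in> M \<rightarrow>\<^sub>M count_space A \<Longrightarrow> f \<in> M \<rightarrow>\<^sub>M count_space UNIV"
  using measurable_compose[of f M "count_space A" "\<lambda>x. x" "count_space UNIV"] by simp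

lemma Meas_imp_measurable: "f \<in> Meas k M \<Longrightarrow> f \<in> M \<rightarrow>\<^sub>M count_space UNIV"
  unfolding Meas_def by (rule measurable_count_space_UNIV)

lemma Meas_iff:
  "space M = UNIV \<Longrightarrow> f \<in> Meas k M \<longleftrightarrow> f \<in> M \<rightarrow>\<^sub>M count_space UNIV \<and> (\<forall>x. f x < k)"
  unfolding Meas_def
  by (auto intro: measurable_count_space_UNIV measurable_count_space_extend[of _ UNIV] dest: measurable_space)

text \<open>A measure-preserving \<open>T\<close> moves the disagreement set of \<open>f\<close> and \<open>f'\<close> to a set of the same
  measure, so the transition events of \<open>f\<close> and \<open>f'\<close> differ by at most twice its measure.\<close>

lemma measure_transition_event_le:
  fixes f f' :: "'a \<Rightarrow> 'b::countable"
  assumes P: "prob_space P" and T: "T \<in> P \<rightarrow>\<^sub>M P" "distr P P T = P"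
    and f: "f \<in> P \<rightarrow>\<^sub>M count_space UNIV" and f': "f' \<in> P \<rightarrow>\<^sub>M count_space UNIV"
  shows "measure P {x \<in> space P. f x = i \<and> f (T x) = j}
    \<le> measure P {x \<in> space P. f' x = i \<and> f' (T x) = j} + 2 * measure P {x \<in> space P. f x \<noteq> f' x}"
proof -
  interpret P: prob_space P by (rule P)
  define E where "E = {x \<in> space P. f x \<noteq> f' x}"
  define C where "C h = {x \<in> space P. h x = i \<and> h (T x) = j}" for h :: "'a \<Rightarrow> 'b"
  have "(\<lambda>x. f x \<noteq> f' x) \<in> P \<rightarrow>\<^sub>M count_space UNIV"
    by (rule measurable_compose_countable2[OF f f'])
  from measurable_sets[OF this, of "{True}"] have E: "E \<in> sets P"
    by (simp add: E_def vimage_def Int_def conj_commute)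
  have TE: "T -` E \<inter> space P \<in> sets P" "measure P (T -` E \<inter> space P) = measure P E"
    using measurable_sets[OF T(1) E] measure_distr[OF T(1) E] T(2) by simp_all
  have C: "C f' \<in> sets P"
    unfolding C_def using f' T(1) by measurable
  have "C f \<subseteq> C f' \<union> E \<union> (T -` E \<inter> space P)"
    using measurable_space[OF T(1)] by (auto simp: C_def E_def)
  then have "measure P (C f) \<le> measure P (C f' \<union> E \<union> (T -` E \<inter> space P))"
    using C E TE by (intro P.finite_measure_mono) auto
  also have "\<dots> \<le> measure P (C f') + measure P E + measure P (T -` E \<inter> space P)"
    using measure_Un_le[of "C f' \<union> E" P "T -` E \<inter> space P"] measure_Un_le[of "C f'" P E] C E TE
    by auto
  finally show ?thesis
    using TE(2) by (simp add: C_def E_def)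
qed

lemma dist_inf_Mat_le:
  assumes P: "prob_space M" and T: "\<And>g. a g \<in> M \<rightarrow>\<^sub>M M" "\<And>g. distr M M (a g) = M"
    and f: "f \<in> Meas k M" and f': "f' \<in> Meas k M" and S: "finite S"
  shows "dist_inf S k (Mat M a S k f) (Mat M a S k f') \<le> 2 * measure M {x \<in> space M. f x \<noteq> f' x}"
proof (rule dist_inf_leI[OF S])
  note le = measure_transition_event_le[OF P T Meas_imp_measurable Meas_imp_measurable]
  show "0 \<le> 2 * measure M {x \<in> space M. f x \<noteq> f' x}" by simp
  have sym: "{x \<in> space M. f' x \<noteq> f x} = {x \<in> space M. f x \<noteq> f' x}" by auto
  fix q assume "q \<in> S \<times> {..<k} \<times> {..<k}"
  then obtain g i j where q: "q = (g, i, j)" "g \<in> S" "i < k" "j < k" by auto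
  show "\<bar>Mat M a S k f q - Mat M a S k f' q\<bar> \<le> 2 * measure M {x \<in> space M. f x \<noteq> f' x}"
    using le[OF f f', of i g j] le[OF f' f, of i g j] unfolding sym by (simp add: q Mat_def abs_le_iff)
qed

lemma finite_measure_compact_open_approx:
  fixes P :: "'a::{second_countable_topology, complete_space} measure"
  assumes P: "finite_measure P" and sb: "sets P = sets borel"
    and A: "A \<in> sets P" and \<delta>: "\<delta> > 0"
  shows "\<exists>K U. compact K \<and> open U \<and> K \<subseteq> A \<and> A \<subseteq> U \<and> measure P U - measure P K < \<delta>"
proof -
  interpret P: finite_measure P by (rule P)
  have fin: "emeasure P (space P) \<noteq> \<infinity>" by simp
  have Ab: "A \<in> sets borel" using A sb by simp
  have "\<exists>K. K \<subseteq> A \<and> compact K \<and> measure P A - \<delta>/2 < measure P K"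
  proof (cases "measure P A < \<delta>/2")
    case True then show ?thesis by (intro exI[of _ "{}"]) auto
  next
    case False
    have "ennreal (measure P A - \<delta>/2) < emeasure P A"
      using False \<delta> by (simp add: P.emeasure_eq_measure ennreal_less_iff)
    also have "\<dots> = (SUP K \<in> {K. K \<subseteq> A \<and> compact K}. emeasure P K)"
      by (rule inner_regular[OF sb fin Ab])
    finally obtain K where K: "K \<subseteq> A" "compact K" "ennreal (measure P A - \<delta>/2) < emeasure P K"
      by (auto simp: less_SUP_iff)
    then have "measure P A - \<delta>/2 < measure P K"
      using False by (simp add: P.emeasure_eq_measure ennreal_less_iff)
    with K show ?thesis by blast
  qed
  then obtain K where K: "K \<subseteq> A" "compact K" "measure P A - \<delta>/2 < measure P K" by blast
  have "(INF U \<in> {U. A \<subseteq> U \<and> open U}. emeasure P U) = emeasure P A"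
    by (rule outer_regular[OF sb fin Ab, symmetric])
  also have "\<dots> < ennreal (measure P A + \<delta>/2)"
    using \<delta> by (simp add: P.emeasure_eq_measure ennreal_less_iff)
  finally obtain U where U: "A \<subseteq> U" "open U" "emeasure P U < ennreal (measure P A + \<delta>/2)"
    by (auto simp: INF_less_iff)
  then have "ennreal (measure P U) < ennreal (measure P A + \<delta>/2)"
    by (simp add: P.emeasure_eq_measure)
  then have "measure P U < measure P A + \<delta>/2"
    using \<delta> by (subst (asm) ennreal_less_iff) auto
  with K U show ?thesis by force
qed

definition step_set :: "'x measure \<Rightarrow> 'y measure \<Rightarrow> ('x \<times> 'y) set \<Rightarrow> bool" where
  "step_set M N R \<longleftrightarrow>
     (\<exists>g h n Q. g \<in> Meas n M \<and> h \<in> Meas n N \<and> R = {p. (g (fst p), h (snd p)) \<in> Q})"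

lemma Meas_pair_encode:
  assumes "space M = UNIV" "g \<in> Meas n M" "g' \<in> Meas n' M"
  shows "(\<lambda>x. g x * n' + g' x) \<in> Meas (n * n') M"
proof -
  have "a * n' + b < n * n'" if "a < n" "b < n'" for a b :: nat
  proof -
    have "a * n' + b < (a + 1) * n'" using that by simp
    also have "\<dots> \<le> n * n'" using that by (intro mult_right_mono) auto
    finally show ?thesis .
  qed
  then show ?thesis
    using assms by (auto simp: Meas_iff intro: measurable_compose_countable2)
qed

lemma step_sets_common_partition:
  assumes sM: "space M = UNIV" and sN: "space N = UNIV"
    and "finite I" and "\<forall>i\<in>I. step_set M N (R i)"
  shows "\<exists>g h n. n > 0 \<and> g \<in> Meas n M \<and> h \<in> Meas n N \<and>
    (\<forall>i\<in>I. \<exists>Q. R i = {p. (g (fst p), h (snd p)) \<in> Q})"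
  using assms(3,4)
proof (induction I rule: finite_induct)
  case empty
  have "(\<lambda>x. 0::nat) \<in> Meas 1 M" "(\<lambda>x. 0::nat) \<in> Meas 1 N" by (auto simp: Meas_iff sM sN)
  then show ?case by blast
next
  case (insert i0 I)
  then obtain g h n where gh: "n > 0" "g \<in> Meas n M" "h \<in> Meas n N"
    "\<forall>i\<in>I. \<exists>Q. R i = {p. (g (fst p), h (snd p)) \<in> Q}" by auto
  from insert obtain g' h' n' Q' where gh': "g' \<in> Meas n' M" "h' \<in> Meas n' N"
    "R i0 = {p. (g' (fst p), h' (snd p)) \<in> Q'}" unfolding step_set_def by auto
  have g'n': "\<And>x. g' x < n'" and h'n': "\<And>y. h' y < n'"
    using gh'(1,2) by (auto simp: Meas_iff sM sN)
  then have "n' > 0" by (metis gr_zeroI not_less_zero)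
  define G where "G x = g x * n' + g' x" for x
  define H where "H y = h y * n' + h' y" for y
  have GH: "G \<in> Meas (n * n') M" "H \<in> Meas (n * n') N"
    unfolding G_def H_def using gh gh' sM sN by (auto intro: Meas_pair_encode)
  have decode: "G x div n' = g x" "G x mod n' = g' x" "H y div n' = h y" "H y mod n' = h' y" for x y
    using g'n' h'n' \<open>n' > 0\<close> by (simp_all add: G_def H_def)
  have "\<exists>Q. R i = {p. (G (fst p), H (snd p)) \<in> Q}" if "i \<in> insert i0 I" for i
  proof (cases "i = i0")
    case True
    show ?thesis
      by (rule exI[of _ "{(a, b). (a mod n', b mod n') \<in> Q'}"]) (simp add: True gh'(3) decode)
  next
    case False
    with that gh(4) obtain Q where "R i = {p. (g (fst p), h (snd p)) \<in> Q}" by auto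
    then show ?thesis
      by (intro exI[of _ "{(a, b). (a div n', b div n') \<in> Q}"]) (simp add: decode)
  qed
  moreover have "n * n' > 0" using gh(1) \<open>n' > 0\<close> by simp
  ultimately show ?case using GH by blast
qed

lemma step_set_Times:
  assumes "space M = UNIV" "space N = UNIV" "X \<in> sets M" "Y \<in> sets N"
  shows "step_set M N (X \<times> Y)"
proof -
  define g where "g x = (if x \<in> X then 1 else 0::nat)" for x
  define h where "h y = (if y \<in> Y then 1 else 0::nat)" for y
  have "g \<in> M \<rightarrow>\<^sub>M count_space UNIV" "h \<in> N \<rightarrow>\<^sub>M count_space UNIV"
    unfolding g_def h_def using assms by (intro measurable_If_set; simp)+
  then have "g \<in> Meas 2 M" "h \<in> Meas 2 N"
    by (simp_all add: Meas_iff assms(1,2) g_def h_def)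
  moreover have "X \<times> Y = {p. (g (fst p), h (snd p)) \<in> {(1, 1)}}"
    by (auto simp: g_def h_def)
  ultimately show ?thesis
    unfolding step_set_def by blast
qed

lemma step_set_sets:
  assumes sM: "space M = UNIV" and sN: "space N = UNIV" and "step_set M N R"
  shows "R \<in> sets (M \<Otimes>\<^sub>M N)"
proof -
  obtain g h n Q where gh: "g \<in> Meas n M" "h \<in> Meas n N" "R = {p. (g (fst p), h (snd p)) \<in> Q}"
    using assms(3) unfolding step_set_def by auto
  have "(\<lambda>p. g (fst p)) \<in> M \<Otimes>\<^sub>M N \<rightarrow>\<^sub>M count_space UNIV"
    "(\<lambda>p. h (snd p)) \<in> M \<Otimes>\<^sub>M N \<rightarrow>\<^sub>M count_space UNIV"
    using gh(1,2) by (auto dest!: Meas_imp_measurable)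
  then have "(\<lambda>p. (g (fst p), h (snd p))) \<in> M \<Otimes>\<^sub>M N \<rightarrow>\<^sub>M (count_space UNIV :: (nat \<times> nat) measure)"
    by (rule measurable_compose_countable2)
  from measurable_sets[OF this, of Q] show ?thesis
    using gh(3) by (simp add: space_pair_measure sM sN vimage_def)
qed

lemma step_set_between_compact_open:
  fixes M :: "'x::topological_space measure" and N :: "'y::topological_space measure"
  assumes sM: "space M = UNIV" "sets M = sets borel" and sN: "space N = UNIV" "sets N = sets borel"
    and K: "compact K" and U: "open U" "K \<subseteq> U"
  shows "\<exists>R. step_set M N R \<and> K \<subseteq> R \<and> R \<subseteq> U"
proof -
  define T where "T = {B. \<exists>X Y. open X \<and> open Y \<and> B = X \<times> Y \<and> B \<subseteq> U}"
  have "K \<subseteq> \<Union>T"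
  proof
    fix p assume "p \<in> K"
    then have "p \<in> U" using U(2) by blast
    then obtain X Y where "open X" "open Y" "p \<in> X \<times> Y" "X \<times> Y \<subseteq> U"
      by (rule open_prod_elim[OF U(1)])
    then show "p \<in> \<Union>T" unfolding T_def by blast
  qed
  moreover have "\<And>B. B \<in> T \<Longrightarrow> open B" unfolding T_def by (auto intro: open_Times)
  ultimately obtain T' where T': "T' \<subseteq> T" "finite T'" "K \<subseteq> \<Union>T'"
    using compactE[OF K] by metis
  have "step_set M N B" if B: "B \<in> T'" for B
  proof -
    obtain X Y where "open X" "open Y" "B = X \<times> Y" using B T' unfolding T_def by auto
    then show ?thesis using step_set_Times[OF sM(1) sN(1), of X Y] sM(2) sN(2) by simp
  qed
  then obtain g h n where gh: "g \<in> Meas n M" "h \<in> Meas n N"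
    "\<forall>B\<in>T'. \<exists>Q. B = {p. (g (fst p), h (snd p)) \<in> Q}"
    using step_sets_common_partition[OF sM(1) sN(1) T'(2), of "\<lambda>B. B"] by auto
  then obtain Q where "\<forall>B\<in>T'. B = {p. (g (fst p), h (snd p)) \<in> Q B}" by metis
  then have "\<Union>T' = {p. (g (fst p), h (snd p)) \<in> (\<Union>B\<in>T'. Q B)}" by blast
  then have "step_set M N (\<Union>T')"
    unfolding step_set_def using gh(1,2) by blast
  moreover have "\<Union>T' \<subseteq> U"
    using T'(1) unfolding T_def by auto
  ultimately show ?thesis
    using T'(3) by blast
qed

lemma step_set_approx:
  fixes M :: "'x::polish_space measure" and N :: "'y::polish_space measure"
  assumes am: "pmp_action M a" and bn: "pmp_action N b"
    and A: "A \<in> sets (M \<Otimes>\<^sub>M N)" and \<delta>: "\<delta> > 0"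
  shows "\<exists>R. step_set M N R \<and> measure (M \<Otimes>\<^sub>M N) ((A - R) \<union> (R - A)) < \<delta>"
proof -
  define P where "P = M \<Otimes>\<^sub>M N"
  interpret P: prob_space P unfolding P_def by (rule pmp_action_pair[OF am bn])
  note M = pmp_actionD[OF am] and N = pmp_actionD[OF bn]
  have "sets P = sets (borel \<Otimes>\<^sub>M borel :: ('x \<times> 'y) measure)"
    unfolding P_def by (rule sets_pair_measure_cong[OF M(2) N(2)])
  then have sb: "sets P = sets borel"
    by (subst (asm) borel_prod)
  have "A \<in> sets P" using A by (simp add: P_def)
  from finite_measure_compact_open_approx[OF P.finite_measure_axioms sb this \<delta>]
  obtain K U where KU: "compact K" "open U" "K \<subseteq> A" "A \<subseteq> U" "measure P U - measure P K < \<delta>"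
    by blast
  obtain R where R: "step_set M N R" "K \<subseteq> R" "R \<subseteq> U"
    using step_set_between_compact_open[OF M(3,2) N(3,2) KU(1,2)] KU(3,4) by blast
  have Us: "U \<in> sets P" and Ks: "K \<in> sets P"
    using KU(1,2) sb by (simp_all add: borel_open compact_imp_closed borel_closed)
  have "measure P ((A - R) \<union> (R - A)) \<le> measure P (U - K)"
    using KU(3,4) R(2,3) Us Ks by (intro P.finite_measure_mono) auto
  also have "\<dots> = measure P U - measure P K"
    using KU(3,4) Us Ks by (intro P.finite_measure_Diff) auto
  finally show ?thesis
    using KU(5) R(1) unfolding P_def by (intro exI[of _ R]) auto
qed

lemma StepI:
  assumes "g \<in> Meas n M" "h \<in> Meas n N" "\<forall>i<n. \<forall>j<n. \<phi> i j < k"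
  shows "(\<lambda>p. \<phi> (g (fst p)) (h (snd p))) \<in> Step k n M N"
  unfolding Step_def
  by (intro CollectI exI[of _ g] exI[of _ h] exI[of _ \<phi>] conjI allI impI assms(1,2))
    (simp_all add: assms(3))

lemma StepE:
  assumes "f \<in> Step k n M N"
  obtains g h \<phi> where "g \<in> Meas n M" "h \<in> Meas n N" "\<forall>i<n. \<forall>j<n. \<phi> i j < k"
    "f = (\<lambda>p. \<phi> (g (fst p)) (h (snd p)))"
proof -
  from assms obtain g h \<phi> where gh: "g \<in> Meas n M" "h \<in> Meas n N" "\<forall>i<n. \<forall>j<n. \<phi> i j < k"
    and f: "\<forall>x y. f (x, y) = \<phi> (g x) (h y)"
    unfolding Step_def by auto
  from f have "f = (\<lambda>p. \<phi> (g (fst p)) (h (snd p)))"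
    by auto
  with gh show ?thesis
    by (rule that)
qed

lemma Step_Meas:
  assumes sM: "space M = UNIV" and sN: "space N = UNIV" and f: "f \<in> Step k n M N"
  shows "f \<in> Meas k (M \<Otimes>\<^sub>M N)"
proof -
  obtain g h \<phi> where gh: "g \<in> Meas n M" "h \<in> Meas n N" "\<forall>i<n. \<forall>j<n. \<phi> i j < k"
    and f_eq: "f = (\<lambda>p. \<phi> (g (fst p)) (h (snd p)))"
    using f by (rule StepE)
  have "(\<lambda>p. g (fst p)) \<in> M \<Otimes>\<^sub>M N \<rightarrow>\<^sub>M count_space UNIV"
    "(\<lambda>p. h (snd p)) \<in> M \<Otimes>\<^sub>M N \<rightarrow>\<^sub>M count_space UNIV"
    using gh(1,2) by (auto dest!: Meas_imp_measurable)
  then have "f \<in> M \<Otimes>\<^sub>M N \<rightarrow>\<^sub>M count_space UNIV"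
    unfolding f_eq by (rule measurable_compose_countable2)
  moreover have "g x < n" "h y < n" for x y
    using gh(1,2) by (auto simp: Meas_iff sM sN)
  ultimately show ?thesis
    using gh(3) by (simp add: Meas_iff sM sN space_pair_measure f_eq)
qed

lemma Step_mono:
  assumes sM: "space M = UNIV" and sN: "space N = UNIV"
    and f: "f \<in> Step k n M N" and "n \<le> n'" and "k > 0"
  shows "f \<in> Step k n' M N"
proof -
  obtain g h \<phi> where gh: "g \<in> Meas n M" "h \<in> Meas n N" "\<forall>i<n. \<forall>j<n. \<phi> i j < k"
    and f_eq: "f = (\<lambda>p. \<phi> (g (fst p)) (h (snd p)))"
    using f by (rule StepE)
  have g: "g \<in> Meas n' M" "\<And>x. g x < n" and h: "h \<in> Meas n' N" "\<And>y. h y < n"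
    using gh(1,2) \<open>n \<le> n'\<close> by (auto simp: Meas_iff sM sN intro: less_le_trans)
  define \<phi>' where "\<phi>' i j = (if i < n \<and> j < n then \<phi> i j else 0)" for i j
  have "(\<lambda>p. \<phi>' (g (fst p)) (h (snd p))) \<in> Step k n' M N"
    by (rule StepI[OF g(1) h(1)]) (simp add: \<phi>'_def gh(3) \<open>k > 0\<close>)
  moreover have "f = (\<lambda>p. \<phi>' (g (fst p)) (h (snd p)))"
    using g(2) h(2) by (simp add: f_eq \<phi>'_def)
  ultimately show ?thesis
    by simp
qed

lemma Step_decode_level_sets:
  fixes Q :: "nat \<Rightarrow> (nat \<times> nat) set"
  assumes g: "g \<in> Meas n M" and h: "h \<in> Meas n N" and "k > 0" and fk: "\<And>p. f p < k"
    and R: "\<And>i. i < k \<Longrightarrow> R i = {p. (g (fst p), h (snd p)) \<in> Q i}"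
  shows "\<exists>f'\<in>Step k n M N. {p. f p \<noteq> f' p} \<subseteq> (\<Union>i<k. ({p. f p = i} - R i) \<union> (R i - {p. f p = i}))"
proof
  define \<phi> where
    "\<phi> a b = (if \<exists>i<k. (a, b) \<in> Q i then LEAST i. i < k \<and> (a, b) \<in> Q i else 0)" for a b
  have "\<phi> a b < k" for a b
    using LeastI_ex[of "\<lambda>i. i < k \<and> (a, b) \<in> Q i"] \<open>k > 0\<close> by (auto simp: \<phi>_def)
  then show "(\<lambda>p. \<phi> (g (fst p)) (h (snd p))) \<in> Step k n M N"
    by (intro StepI g h) simp
  show "{p. f p \<noteq> \<phi> (g (fst p)) (h (snd p))} \<subseteq> (\<Union>i<k. ({p. f p = i} - R i) \<union> (R i - {p. f p = i}))"
  proof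
    fix p assume p: "p \<in> {p. f p \<noteq> \<phi> (g (fst p)) (h (snd p))}"
    show "p \<in> (\<Union>i<k. ({p. f p = i} - R i) \<union> (R i - {p. f p = i}))"
    proof (rule ccontr)
      assume "p \<notin> (\<Union>i<k. ({p. f p = i} - R i) \<union> (R i - {p. f p = i}))"
      then have Q_iff: "(g (fst p), h (snd p)) \<in> Q i \<longleftrightarrow> f p = i" if "i < k" for i
        using R[OF that] that by blast
      then have "(LEAST i. i < k \<and> (g (fst p), h (snd p)) \<in> Q i) = f p"
        using fk[of p] by (intro Least_equality) auto
      moreover have "\<exists>i<k. (g (fst p), h (snd p)) \<in> Q i"
        using Q_iff fk[of p] by auto
      ultimately show False
        using p by (simp add: \<phi>_def)
    qed
  qed
qed

lemma Step_approx:
  fixes M :: "'x::polish_space measure" and N :: "'y::polish_space measure"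
  assumes am: "pmp_action M a" and bn: "pmp_action N b"
    and f: "f \<in> Meas k (M \<Otimes>\<^sub>M N)" and k: "k > 0" and \<delta>: "\<delta> > 0"
  shows "\<exists>n>0. \<exists>f'\<in>Step k n M N. measure (M \<Otimes>\<^sub>M N) {p \<in> space (M \<Otimes>\<^sub>M N). f p \<noteq> f' p} < \<delta>"
proof -
  define P where "P = M \<Otimes>\<^sub>M N"
  interpret P: prob_space P unfolding P_def by (rule pmp_action_pair[OF am bn])
  note sM = pmp_actionD(3)[OF am] and sN = pmp_actionD(3)[OF bn]
  have sP: "space P = UNIV" unfolding P_def by (rule pmp_action_pair[OF am bn])
  have fk: "f p < k" for p
    using f sP by (cases p) (simp add: Meas_iff P_def)
  define A where "A i = {p. f p = i}" for i
  have A: "A i \<in> sets P" for i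
    using measurable_sets[OF Meas_imp_measurable[OF f], of "{i}"] sP
    by (simp add: A_def P_def vimage_def)
  have "\<forall>i. \<exists>R. step_set M N R \<and> measure P ((A i - R) \<union> (R - A i)) < \<delta> / k"
    using step_set_approx[OF am bn, of _ "\<delta> / k"] A \<delta> k unfolding P_def by auto
  then obtain R where "\<forall>i. step_set M N (R i) \<and> measure P ((A i - R i) \<union> (R i - A i)) < \<delta> / k"
    by (rule choice[THEN exE]) blast
  then have R: "\<And>i. step_set M N (R i)" "\<And>i. measure P ((A i - R i) \<union> (R i - A i)) < \<delta> / k"
    by auto
  have RP: "R i \<in> sets P" for i
    unfolding P_def by (rule step_set_sets[OF sM sN R(1)])
  obtain g h n where gh: "n > 0" "g \<in> Meas n M" "h \<in> Meas n N"
    "\<forall>i\<in>{..<k}. \<exists>Q. R i = {p. (g (fst p), h (snd p)) \<in> Q}"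
    using step_sets_common_partition[OF sM sN, of "{..<k}" R] R(1) by auto
  then obtain Q where "\<forall>i\<in>{..<k}. R i = {p. (g (fst p), h (snd p)) \<in> Q i}"
    using bchoice[OF gh(4)] by blast
  then have "\<And>i. i < k \<Longrightarrow> R i = {p. (g (fst p), h (snd p)) \<in> Q i}"
    by auto
  from Step_decode_level_sets[where f = f and R = R and Q = Q, OF gh(2,3) k fk this]
  obtain f' where f': "f' \<in> Step k n M N" "{p. f p \<noteq> f' p} \<subseteq> (\<Union>i<k. (A i - R i) \<union> (R i - A i))"
    unfolding A_def by blast
  then have "measure P {p \<in> space P. f p \<noteq> f' p} \<le> measure P (\<Union>i<k. (A i - R i) \<union> (R i - A i))"
    using A RP sP by (intro P.finite_measure_mono) auto
  also have "\<dots> \<le> (\<Sum>i<k. measure P ((A i - R i) \<union> (R i - A i)))"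
    using A RP by (intro measure_subadditive_finite) (auto simp: P.emeasure_eq_measure)
  also have "\<dots> < (\<Sum>i<k. \<delta> / k)"
    using k R(2) by (intro sum_strict_mono) auto
  also have "\<dots> = \<delta>" using k by simp
  finally show ?thesis using f'(1) gh(1) unfolding P_def by blast
qed

abbreviation Mat_prod where
  "Mat_prod M a N b S k \<equiv> Mat (M \<Otimes>\<^sub>M N) (prod_act a b) S k"

lemma dist_inf_Mat_Step_approx:
  fixes M :: "'x::polish_space measure" and N :: "'y::polish_space measure"
  assumes am: "pmp_action M a" and bn: "pmp_action N b"
    and f: "f \<in> Meas k (M \<Otimes>\<^sub>M N)" and k: "k > 0" and S: "finite S" and \<delta>: "\<delta> > 0"
  shows "\<exists>n>0. \<exists>f'\<in>Step k n M N. dist_inf S k (Mat_prod M a N b S k f) (Mat_prod M a N b S k f') < \<delta>"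
proof -
  obtain n f' where nf: "n > 0" "f' \<in> Step k n M N"
    "measure (M \<Otimes>\<^sub>M N) {p \<in> space (M \<Otimes>\<^sub>M N). f p \<noteq> f' p} < \<delta> / 3"
    using Step_approx[OF am bn f k, of "\<delta> / 3"] \<delta> by auto
  have "f' \<in> Meas k (M \<Otimes>\<^sub>M N)"
    using Step_Meas[OF pmp_actionD(3)[OF am] pmp_actionD(3)[OF bn] nf(2)] .
  then have "dist_inf S k (Mat_prod M a N b S k f) (Mat_prod M a N b S k f')
      \<le> 2 * measure (M \<Otimes>\<^sub>M N) {p \<in> space (M \<Otimes>\<^sub>M N). f p \<noteq> f' p}"
    by (intro dist_inf_Mat_le[OF pmp_action_pair(1)[OF am bn]] prod_act_measure_preserving[OF am bn] f S)
  also have "\<dots> < \<delta>"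
    using nf(3) measure_nonneg[of "M \<Otimes>\<^sub>M N" "{p \<in> space (M \<Otimes>\<^sub>M N). f p \<noteq> f' p}"] by linarith
  finally show ?thesis
    using nf(1,2) by blast
qed

lemma Step_approx_finite_set:
  fixes M :: "'x::polish_space measure" and N :: "'y::polish_space measure"
  assumes am: "pmp_action M a" and bn: "pmp_action N b"
    and F: "finite F" "F \<subseteq> Mat_prod M a N b S k ` Meas k (M \<Otimes>\<^sub>M N)"
    and k: "k > 0" and S: "finite S" and \<delta>: "\<delta> > 0"
  shows "\<exists>n>0. \<forall>v\<in>F. \<exists>f'\<in>Step k n M N. dist_inf S k v (Mat_prod M a N b S k f') < \<delta>"
proof -
  note sM = pmp_actionD(3)[OF am] and sN = pmp_actionD(3)[OF bn]
  have "\<exists>n. n > 0 \<and> (\<exists>f'\<in>Step k n M N. dist_inf S k v (Mat_prod M a N b S k f') < \<delta>)"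
    if "v \<in> F" for v
  proof -
    from that F(2) obtain f where "f \<in> Meas k (M \<Otimes>\<^sub>M N)" "v = Mat_prod M a N b S k f"
      by blast
    with dist_inf_Mat_Step_approx[OF am bn _ k S \<delta>] show ?thesis
      by blast
  qed
  then have "\<forall>v\<in>F. \<exists>n. n > 0 \<and> (\<exists>f'\<in>Step k n M N. dist_inf S k v (Mat_prod M a N b S k f') < \<delta>)"
    by blast
  from bchoice[OF this] obtain n where
    n: "\<forall>v\<in>F. n v > 0 \<and> (\<exists>f'\<in>Step k (n v) M N. dist_inf S k v (Mat_prod M a N b S k f') < \<delta>)"
    by blast
  define n\<^sub>0 where "n\<^sub>0 = Max (insert 1 (n ` F))"
  have "\<forall>v\<in>F. \<exists>f'\<in>Step k n\<^sub>0 M N. dist_inf S k v (Mat_prod M a N b S k f') < \<delta>"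
  proof
    fix v assume v: "v \<in> F"
    with n obtain f' where "f' \<in> Step k (n v) M N" "dist_inf S k v (Mat_prod M a N b S k f') < \<delta>"
      by blast
    moreover have "n v \<le> n\<^sub>0"
      using F(1) v by (simp add: n\<^sub>0_def)
    ultimately show "\<exists>f'\<in>Step k n\<^sub>0 M N. dist_inf S k v (Mat_prod M a N b S k f') < \<delta>"
      using Step_mono[OF sM sN _ _ k] by blast
  qed
  moreover have "0 < n\<^sub>0"
  proof -
    have "1 \<le> n\<^sub>0"
      unfolding n\<^sub>0_def using F(1) by (intro Max_ge) auto
    then show ?thesis by simp
  qed
  ultimately show ?thesis
    by blast
qed

lemma measure_pair_Times:
  assumes "prob_space M" "prob_space N" "X \<in> sets M" "Y \<in> sets N"
  shows "measure (M \<Otimes>\<^sub>M N) (X \<times> Y) = measure M X * measure N Y"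
proof -
  interpret N: prob_space N by fact
  have "measure (M \<Otimes>\<^sub>M N) (X \<times> Y) = enn2real (emeasure M X * emeasure N Y)"
    unfolding measure_def using assms by (simp add: N.emeasure_pair_measure_Times)
  also have "\<dots> = measure M X * measure N Y" by (simp add: enn2real_mult measure_def)
  finally show ?thesis .
qed

lemma measure_pair_preimage_finite:
  fixes U :: "'x \<Rightarrow> 'a" and V :: "'y \<Rightarrow> 'b"
  assumes M: "prob_space M" and N: "prob_space N" and A: "finite A" and B: "finite B"
    and U: "\<And>x. x \<in> space M \<Longrightarrow> U x \<in> A" "\<And>a. U -` {a} \<inter> space M \<in> sets M"
    and V: "\<And>y. y \<in> space N \<Longrightarrow> V y \<in> B" "\<And>b. V -` {b} \<inter> space N \<in> sets N"
  shows "measure (M \<Otimes>\<^sub>M N) {p \<in> space (M \<Otimes>\<^sub>M N). (U (fst p), V (snd p)) \<in> Q} =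
    (\<Sum>a\<in>A. \<Sum>b\<in>B. if (a, b) \<in> Q
       then measure M (U -` {a} \<inter> space M) * measure N (V -` {b} \<inter> space N) else 0)"
    (is "_ = ?rhs")
proof -
  interpret P: prob_space "M \<Otimes>\<^sub>M N"
    using M N by (rule prob_space_pair)
  define F where "F q = (U -` {fst q} \<inter> space M) \<times> (V -` {snd q} \<inter> space N)" for q
  have "{p \<in> space (M \<Otimes>\<^sub>M N). (U (fst p), V (snd p)) \<in> Q} = (\<Union>q\<in>(A \<times> B) \<inter> Q. F q)"
    (is "?L = ?R")
  proof
    show "?L \<subseteq> ?R"
    proof
      fix p assume "p \<in> ?L"
      then show "p \<in> ?R"
        using U(1) V(1) by (intro UN_I[of "(U (fst p), V (snd p))"]) (auto simp: F_def space_pair_measure)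
    qed
    show "?R \<subseteq> ?L"
      by (auto simp: F_def space_pair_measure)
  qed
  also have "measure (M \<Otimes>\<^sub>M N) \<dots> = (\<Sum>q\<in>(A \<times> B) \<inter> Q. measure (M \<Otimes>\<^sub>M N) (F q))"
    using A B U(2) V(2) by (intro P.finite_measure_finite_Union)
      (auto simp: F_def disjoint_family_on_def)
  also have "\<dots> = (\<Sum>q\<in>A \<times> B. if q \<in> Q then measure (M \<Otimes>\<^sub>M N) (F q) else 0)"
    using A B by (intro sum.inter_restrict) simp
  also have "\<dots> = (\<Sum>a\<in>A. \<Sum>b\<in>B. if (a, b) \<in> Q then measure (M \<Otimes>\<^sub>M N) (F (a, b)) else 0)"
    by (simp add: sum.cartesian_product)
  also have "\<dots> = ?rhs"
    unfolding F_def by (intro sum.cong refl) (simp add: measure_pair_Times[OF M N] U(2) V(2))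
  finally show ?thesis .
qed

text \<open>\<open>step_matrix S k n \<phi> u v\<close> is the matrix of \<open>(x, y) \<mapsto> \<phi> (g x) (h y)\<close> computed from the
  matrices \<open>u\<close> of \<open>g\<close> and \<open>v\<close> of \<open>h\<close>; it is a polynomial, hence continuous, in \<open>(u, v)\<close>.\<close>

definition step_matrix :: "'g set \<Rightarrow> nat \<Rightarrow> nat \<Rightarrow> (nat \<Rightarrow> nat \<Rightarrow> nat) \<Rightarrow> ('g \<times> nat \<times> nat \<Rightarrow> real)
    \<Rightarrow> ('g \<times> nat \<times> nat \<Rightarrow> real) \<Rightarrow> ('g \<times> nat \<times> nat \<Rightarrow> real)" where
  "step_matrix S k n \<phi> u v = (\<lambda>(g, i, j). if g \<in> S \<and> i < k \<and> j < k then
     (\<Sum>ac\<in>{..<n} \<times> {..<n}. \<Sum>bd\<in>{..<n} \<times> {..<n}.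
        if \<phi> (fst ac) (fst bd) = i \<and> \<phi> (snd ac) (snd bd) = j
        then u (g, fst ac, snd ac) * v (g, fst bd, snd bd) else 0) else 0)"

lemma continuous_on_step_matrix:
  fixes S :: "'g set"
  shows "continuous_on UNIV (\<lambda>z. step_matrix S k n \<phi> (fst z) (snd z))"
proof (rule continuous_on_coordinatewise_then_product)
  have coord: "continuous_on UNIV (\<lambda>z. fst z q :: real)" "continuous_on UNIV (\<lambda>z. snd z q :: real)"
    for q :: "'g \<times> nat \<times> nat"
    by (rule continuous_on_product_then_coordinatewise, rule continuous_on_fst continuous_on_snd,
        rule continuous_on_id)+
  have if_zero: "continuous_on UNIV f \<Longrightarrow> continuous_on UNIV (\<lambda>z. if P then f z else (0::real))"
    for P and f :: "('g \<times> nat \<times> nat \<Rightarrow> real) \<times> ('g \<times> nat \<times> nat \<Rightarrow> real) \<Rightarrow> real"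
    by (cases P) auto
  fix q :: "'g \<times> nat \<times> nat"
  obtain g i j where q: "q = (g, i, j)" by (cases q)
  show "continuous_on UNIV (\<lambda>z. step_matrix S k n \<phi> (fst z) (snd z) q)"
    unfolding q step_matrix_def prod.case
    by (intro if_zero continuous_on_sum continuous_on_mult coord)
qed

lemma Mat_step_function:
  fixes M :: "'x::polish_space measure" and N :: "'y::polish_space measure"
  assumes am: "pmp_action M a" and bn: "pmp_action N b"
    and g: "g \<in> Meas n M" and h: "h \<in> Meas n N"
  shows "Mat (M \<Otimes>\<^sub>M N) (prod_act a b) S k (\<lambda>p. \<phi> (g (fst p)) (h (snd p)))
     = step_matrix S k n \<phi> (Mat M a S n g) (Mat N b S n h)"
proof (rule ext, clarify)
  fix \<gamma> i j
  note M = pmp_actionD[OF am] and N = pmp_actionD[OF bn]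
  define U where "U x = (g x, g (a \<gamma> x))" for x
  define V where "V y = (h y, h (b \<gamma> y))" for y
  have gm: "g \<in> M \<rightarrow>\<^sub>M count_space UNIV" and hm: "h \<in> N \<rightarrow>\<^sub>M count_space UNIV"
    using g h by (simp_all add: Meas_imp_measurable)
  have "U \<in> M \<rightarrow>\<^sub>M count_space UNIV" "V \<in> N \<rightarrow>\<^sub>M count_space UNIV"
    unfolding U_def V_def
    by (rule measurable_compose_countable2[where F = Pair, OF gm measurable_compose[OF M(4) gm]],
        rule measurable_compose_countable2[where F = Pair, OF hm measurable_compose[OF N(4) hm]])
  then have UV: "U -` {c} \<inter> space M \<in> sets M" "V -` {c} \<inter> space N \<in> sets N" for c
    by (auto intro: measurable_sets)
  have "U x \<in> {..<n} \<times> {..<n}" "V y \<in> {..<n} \<times> {..<n}" for x y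
    using g h by (auto simp: U_def V_def Meas_iff M(3) N(3))
  note pair = measure_pair_preimage_finite[OF M(1) N(1) _ _ this(1) UV(1) this(2) UV(2)]
  show "Mat (M \<Otimes>\<^sub>M N) (prod_act a b) S k (\<lambda>p. \<phi> (g (fst p)) (h (snd p))) (\<gamma>, i, j) =
        step_matrix S k n \<phi> (Mat M a S n g) (Mat N b S n h) (\<gamma>, i, j)"
    using pair[of "{(c, d). \<phi> (fst c) (fst d) = i \<and> \<phi> (snd c) (snd d) = j}"]
    by (auto simp: Mat_def step_matrix_def prod_act_def U_def V_def vimage_def Int_def M(3) N(3)
        intro!: sum.cong)
qed

lemma Mat_vanishes: "p \<notin> S \<times> {..<k} \<times> {..<k} \<Longrightarrow> Mat M a S k f p = 0"
  by (cases p) (auto simp: Mat_def)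

lemma Mat_bounds: "prob_space M \<Longrightarrow> 0 \<le> Mat M a S k f p \<and> Mat M a S k f p \<le> 1"
  by (cases p) (auto simp: Mat_def prob_space.prob_le_1)

lemma Mat_in_closure_Step:
  fixes M :: "'x::polish_space measure" and N :: "'y::polish_space measure"
    and a :: "'g::{countable,group_add} \<Rightarrow> 'x \<Rightarrow> 'x"
  assumes am: "pmp_action M a" and bn: "pmp_action N b"
    and f: "f \<in> Meas k (M \<Otimes>\<^sub>M N)" and k: "k > 0" and S: "finite S"
  shows "Mat_prod M a N b S k f \<in> closure (\<Union>n\<in>{0<..}. Mat_prod M a N b S k ` Step k n M N)"
proof (rule dist_inf_less_imp_closure[OF S])
  fix \<delta> :: real assume "\<delta> > 0"
  then obtain n f' where "n > 0" "f' \<in> Step k n M N"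
    "dist_inf S k (Mat_prod M a N b S k f) (Mat_prod M a N b S k f') < \<delta>"
    using dist_inf_Mat_Step_approx[OF am bn f k S] by blast
  then show "\<exists>c\<in>\<Union>n\<in>{0<..}. Mat_prod M a N b S k ` Step k n M N. dist_inf S k (Mat_prod M a N b S k f) c < \<delta>"
    by blast
qed (blast intro: Mat_vanishes)+

lemma Mat_in_closure_weak_equiv:
  assumes "weak_equiv M a M' a'" "finite S" "n > 0" "g \<in> Meas n M"
  shows "Mat M a S n g \<in> closure (Mat M' a' S n ` Meas n M')"
proof -
  have "Mat M a S n g \<in> Cset M a S n"
    unfolding Cset_def by (rule closure_subset[THEN subsetD], rule imageI, rule assms(4))
  also have "Cset M a S n = Cset M' a' S n"
    using assms(1)[unfolded weak_equiv_def, rule_format, of S n] assms(2,3) by simp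
  finally show ?thesis
    unfolding Cset_def .
qed

text \<open>A step function matrix is the image of the pair of matrices of its factors under the
  continuous map \<open>step_matrix\<close>, and weak equivalence puts that pair in the closure of the pairs
  of matrices of the other actions.\<close>

lemma Step_Mat_closure:
  fixes M :: "'x::polish_space measure" and N :: "'y::polish_space measure"
    and a :: "'g::group_add \<Rightarrow> 'x \<Rightarrow> 'x"
    and M' :: "'x2::polish_space measure" and N' :: "'y2::polish_space measure"
  assumes am: "pmp_action M a" and bn: "pmp_action N b"
    and am': "pmp_action M' a'" and bn': "pmp_action N' b'"
    and wM: "weak_equiv M a M' a'" and wN: "weak_equiv N b N' b'"
    and S: "finite S" and n: "n > 0"
  shows "Mat_prod M a N b S k ` Step k n M N \<subseteq> closure (Mat_prod M' a' N' b' S k ` Step k n M' N')"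
proof
  fix c assume "c \<in> Mat_prod M a N b S k ` Step k n M N"
  then obtain f where f: "f \<in> Step k n M N" and c: "c = Mat_prod M a N b S k f"
    by blast
  obtain g h \<phi> where gh: "g \<in> Meas n M" "h \<in> Meas n N" "\<forall>i<n. \<forall>j<n. \<phi> i j < k"
    and f_eq: "f = (\<lambda>p. \<phi> (g (fst p)) (h (snd p)))"
    using f by (rule StepE)
  define \<Phi> where "\<Phi> z = step_matrix S k n \<phi> (fst z) (snd z)" for z :: "('g \<times> nat \<times> nat \<Rightarrow> real) \<times> _"
  define U' where "U' = Mat M' a' S n ` Meas n M'"
  define V' where "V' = Mat N' b' S n ` Meas n N'"
  have uv: "(Mat M a S n g, Mat N b S n h) \<in> closure (U' \<times> V')"
    using Mat_in_closure_weak_equiv[OF wM S n gh(1)] Mat_in_closure_weak_equiv[OF wN S n gh(2)]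
    by (simp add: closure_Times U'_def V'_def)
  have img: "\<Phi> ` (U' \<times> V') \<subseteq> Mat_prod M' a' N' b' S k ` Step k n M' N'"
  proof
    fix w assume "w \<in> \<Phi> ` (U' \<times> V')"
    then obtain z where z: "z \<in> U' \<times> V'" and w: "w = \<Phi> z"
      by blast
    then obtain g' h' where gh': "g' \<in> Meas n M'" "h' \<in> Meas n N'"
      and z_eq: "z = (Mat M' a' S n g', Mat N' b' S n h')"
      unfolding U'_def V'_def by blast
    have "(\<lambda>p. \<phi> (g' (fst p)) (h' (snd p))) \<in> Step k n M' N'"
      by (rule StepI[OF gh' gh(3)])
    moreover have "w = Mat_prod M' a' N' b' S k (\<lambda>p. \<phi> (g' (fst p)) (h' (snd p)))"
      unfolding w z_eq \<Phi>_def by (simp add: Mat_step_function[OF am' bn' gh'])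
    ultimately show "w \<in> Mat_prod M' a' N' b' S k ` Step k n M' N'"
      by blast
  qed
  have "\<Phi> ` closure (U' \<times> V') \<subseteq> closure (Mat_prod M' a' N' b' S k ` Step k n M' N')"
  proof (rule image_closure_subset)
    show "continuous_on (closure (U' \<times> V')) \<Phi>"
      unfolding \<Phi>_def by (rule continuous_on_subset[OF continuous_on_step_matrix]) simp
    show "\<Phi> ` (U' \<times> V') \<subseteq> closure (Mat_prod M' a' N' b' S k ` Step k n M' N')"
      using img closure_subset by blast
  qed simp
  moreover have "c = \<Phi> (Mat M a S n g, Mat N b S n h)"
    unfolding c f_eq \<Phi>_def by (simp add: Mat_step_function[OF am bn gh(1,2)])
  ultimately show "c \<in> closure (Mat_prod M' a' N' b' S k ` Step k n M' N')"
    using imageI[OF uv, of \<Phi>] by blast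
qed

lemma weak_equiv_sym: "weak_equiv M a M' a' \<Longrightarrow> weak_equiv M' a' M a"
  unfolding weak_equiv_def by auto

lemma Cset_pair_subset:
  fixes M :: "'x::polish_space measure" and N :: "'y::polish_space measure"
    and M' :: "'x2::polish_space measure" and N' :: "'y2::polish_space measure"
    and a :: "'g::{countable,group_add} \<Rightarrow> 'x \<Rightarrow> 'x"
  assumes am: "pmp_action M a" and bn: "pmp_action N b"
    and am': "pmp_action M' a'" and bn': "pmp_action N' b'"
    and wM: "weak_equiv M a M' a'" and wN: "weak_equiv N b N' b'"
    and S: "finite S" and k: "k > 0"
  shows "Cset (M' \<Otimes>\<^sub>M N') (prod_act a' b') S k \<subseteq> Cset (M \<Otimes>\<^sub>M N) (prod_act a b) S k"
proof -
  have "Mat_prod M' a' N' b' S k ` Step k n M' N' \<subseteq> Cset (M \<Otimes>\<^sub>M N) (prod_act a b) S k"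
    if "n > 0" for n
  proof -
    have "Step k n M N \<subseteq> Meas k (M \<Otimes>\<^sub>M N)"
      using Step_Meas[OF pmp_actionD(3)[OF am] pmp_actionD(3)[OF bn]] by blast
    then have "closure (Mat_prod M a N b S k ` Step k n M N) \<subseteq> Cset (M \<Otimes>\<^sub>M N) (prod_act a b) S k"
      unfolding Cset_def by (intro closure_mono image_mono)
    with Step_Mat_closure[OF am' bn' am bn weak_equiv_sym[OF wM] weak_equiv_sym[OF wN] S that]
    show ?thesis by blast
  qed
  then have "closure (\<Union>n\<in>{0<..}. Mat_prod M' a' N' b' S k ` Step k n M' N')
      \<subseteq> Cset (M \<Otimes>\<^sub>M N) (prod_act a b) S k"
    by (intro closure_minimal UN_least) (auto simp: Cset_def)
  with Mat_in_closure_Step[OF am' bn' _ k S] show ?thesis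
    unfolding Cset_def[of "M' \<Otimes>\<^sub>M N'"] by (intro closure_minimal) (auto simp: Cset_def)
qed

lemma step_net_transfer:
  fixes M :: "'x::polish_space measure" and N :: "'y::polish_space measure"
    and M' :: "'x2::polish_space measure" and N' :: "'y2::polish_space measure"
    and a :: "'g::{countable,group_add} \<Rightarrow> 'x \<Rightarrow> 'x"
  assumes am: "pmp_action M a" and bn: "pmp_action N b"
    and am': "pmp_action M' a'" and bn': "pmp_action N' b'"
    and wM: "weak_equiv M a M' a'" and wN: "weak_equiv N b N' b'"
    and S: "finite S" and k: "k > 0" and n: "n > 0"
    and net: "step_net M a N b S k \<epsilon> n"
  shows "step_net M' a' N' b' S k \<epsilon> n"
  unfolding step_net_def is_net_def
proof
  fix w assume "w \<in> Cset (M' \<Otimes>\<^sub>M N') (prod_act a' b') S k"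
  then have "w \<in> Cset (M \<Otimes>\<^sub>M N) (prod_act a b) S k"
    using Cset_pair_subset[OF am bn am' bn' wM wN S k] by blast
  then obtain c where c: "c \<in> Mat_prod M a N b S k ` Step k n M N" "dist_inf S k w c < \<epsilon>"
    using net unfolding step_net_def is_net_def by blast
  have "c \<in> closure (Mat_prod M' a' N' b' S k ` Step k n M' N')"
    using Step_Mat_closure[OF am bn am' bn' wM wN S n] c(1) by blast
  then obtain c' where c': "c' \<in> Mat_prod M' a' N' b' S k ` Step k n M' N'"
    "dist_inf S k c c' < \<epsilon> - dist_inf S k w c"
    using closure_imp_dist_inf_less[OF S] c(2) by (metis diff_gt_0_iff_gt)
  have "dist_inf S k w c' < \<epsilon>"
    using dist_inf_triangle[OF S, of k w c' c] c'(2) by simp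
  with c'(1) show "\<exists>c'\<in>Mat_prod M' a' N' b' S k ` Step k n M' N'. dist_inf S k w c' < \<epsilon>"
    by blast
qed

text \<open>Take a finite \<open>\<epsilon>/3\<close>-net of matrices and approximate all its points by step functions
  of one common level.\<close>

lemma step_net_exists:
  fixes M :: "'x::polish_space measure" and N :: "'y::polish_space measure"
    and a :: "'g::{countable,group_add} \<Rightarrow> 'x \<Rightarrow> 'x"
  assumes am: "pmp_action M a" and bn: "pmp_action N b"
    and S: "finite S" and k: "k > 0" and \<epsilon>: "\<epsilon> > 0"
  shows "\<exists>n>0. step_net M a N b S k \<epsilon> n"
proof -
  define A where "A = Mat_prod M a N b S k ` Meas k (M \<Otimes>\<^sub>M N)"
  have "\<And>u p. u \<in> A \<Longrightarrow> 0 \<le> u p \<and> u p \<le> 1"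
    using Mat_bounds[OF pmp_action_pair(1)[OF am bn]] unfolding A_def by blast
  then obtain F where F: "F \<subseteq> A" "finite F" "\<forall>u\<in>A. \<exists>v\<in>F. dist_inf S k u v < \<epsilon> / 3"
    using dist_inf_finite_subnet[OF S, where \<delta> = "\<epsilon> / 3" and A = A and k = k] \<epsilon> by auto
  then obtain n where "n > 0"
    and n: "\<forall>v\<in>F. \<exists>f'\<in>Step k n M N. dist_inf S k v (Mat_prod M a N b S k f') < \<epsilon> / 3"
    using Step_approx_finite_set[OF am bn F(2), of S k "\<epsilon> / 3"] k S \<epsilon> unfolding A_def by auto
  have "step_net M a N b S k \<epsilon> n"
    unfolding step_net_def is_net_def
  proof
    fix w assume "w \<in> Cset (M \<Otimes>\<^sub>M N) (prod_act a b) S k"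
    then have "w \<in> closure A"
      by (simp add: Cset_def A_def)
    then obtain u where u: "u \<in> A" "dist_inf S k w u < \<epsilon> / 3"
      using closure_imp_dist_inf_less[OF S, where \<delta> = "\<epsilon> / 3" and k = k] \<epsilon> by auto
    then obtain v where v: "v \<in> F" "dist_inf S k u v < \<epsilon> / 3"
      using F(3) by blast
    then obtain f' where f': "f' \<in> Step k n M N" "dist_inf S k v (Mat_prod M a N b S k f') < \<epsilon> / 3"
      using n by blast
    have "dist_inf S k w (Mat_prod M a N b S k f')
        \<le> dist_inf S k w u + dist_inf S k u v + dist_inf S k v (Mat_prod M a N b S k f')"
      using dist_inf_triangle[OF S, of k w "Mat_prod M a N b S k f'" u]
        dist_inf_triangle[OF S, of k u "Mat_prod M a N b S k f'" v] by linarith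
    also have "\<dots> < \<epsilon>"
      using u(2) v(2) f'(2) by linarith
    finally show "\<exists>c\<in>Mat_prod M a N b S k ` Step k n M N. dist_inf S k w c < \<epsilon>"
      using f'(1) by blast
  qed
  with \<open>n > 0\<close> show ?thesis
    by blast
qed

theorem mainTheorem6:
  fixes \<alpha> :: "'g::{group_add,countable,infinite} \<Rightarrow> 'x::polish_space \<Rightarrow> 'x"
    and \<mu> :: "'x measure"
    and \<beta> :: "'g \<Rightarrow> 'y::polish_space \<Rightarrow> 'y"
    and \<nu> :: "'y measure"
    and S :: "'g set" and k :: nat and \<epsilon> :: real
  assumes "pmp_action \<mu> \<alpha>" and "pmp_action \<nu> \<beta>"
    and "finite S" and "k > 0" and "\<epsilon> > 0"
  shows "(\<exists>n>0. step_net \<mu> \<alpha> \<nu> \<beta> S k \<epsilon> n) \<and>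
    (\<forall>(\<mu>' :: 'x2::polish_space measure) \<alpha>' (\<nu>' :: 'y2::polish_space measure) \<beta>'.
       pmp_action \<mu>' \<alpha>' \<and> pmp_action \<nu>' \<beta>' \<and>
       weak_equiv \<mu> \<alpha> \<mu>' \<alpha>' \<and> weak_equiv \<nu> \<beta> \<nu>' \<beta>' \<longrightarrow>
       Nsk \<mu> \<alpha> \<nu> \<beta> S k \<epsilon> = Nsk \<mu>' \<alpha>' \<nu>' \<beta>' S k \<epsilon>)"
proof (intro conjI allI impI)
  show "\<exists>n>0. step_net \<mu> \<alpha> \<nu> \<beta> S k \<epsilon> n"
    using step_net_exists[OF assms] .
next
  fix \<mu>' :: "'x2::polish_space measure" and \<alpha>' and \<nu>' :: "'y2::polish_space measure" and \<beta>'
  assume "pmp_action \<mu>' \<alpha>' \<and> pmp_action \<nu>' \<beta>' \<and> weak_equiv \<mu> \<alpha> \<mu>' \<alpha>' \<and> weak_equiv \<nu> \<beta> \<nu>' \<beta>'"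
  then have am': "pmp_action \<mu>' \<alpha>'" and bn': "pmp_action \<nu>' \<beta>'"
    and wM: "weak_equiv \<mu> \<alpha> \<mu>' \<alpha>'" and wN: "weak_equiv \<nu> \<beta> \<nu>' \<beta>'" by auto
  have same_nets: "n > 0 \<and> step_net \<mu> \<alpha> \<nu> \<beta> S k \<epsilon> n \<longleftrightarrow> n > 0 \<and> step_net \<mu>' \<alpha>' \<nu>' \<beta>' S k \<epsilon> n" for n
    using step_net_transfer[OF assms(1,2) am' bn' wM wN assms(3,4)]
      step_net_transfer[OF am' bn' assms(1,2) weak_equiv_sym[OF wM] weak_equiv_sym[OF wN] assms(3,4)]
    by blast
  show "Nsk \<mu> \<alpha> \<nu> \<beta> S k \<epsilon> = Nsk \<mu>' \<alpha>' \<nu>' \<beta>' S k \<epsilon>"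
    unfolding Nsk_def same_nets ..
qed

end
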